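(* Let $l\ge-\tfrac12$. There exist constants $A_1,A_2$ depending only on $l$ such that for all $0<\eta<\xi$: $$\int_\eta^\xi V_1(z;\xi,\eta)\,z^{l-\frac12}\,dz\le A_1(\xi-\eta)^{l+\frac12},\qquad\int_0^\eta V_2(z;\xi,\eta)\,z^{l-\frac12}\,dz\le A_2(\xi-\eta)^{l+\frac12}.$$
   Context: Let ${}_2F_1$ denote the Gauss hypergeometric function (analytically continued to $(-\infty,0)$). For $0<\eta<z<\xi$ put $\sigma_1=\frac{(z-\xi)\eta}{(z-\eta)\xi}$ and $V_1(z;\xi,\eta)=\frac{(z-\eta)^l\xi^l}{z^{2l}}\left|{}_2F_1(-l,-l;1;\sigma_1)\right|$. For $0<z<\eta<\xi$ put $\sigma_2=-\frac{z(\xi-\eta)}{\xi(\eta-z)}$ and $V_2(z;\xi,\eta)=\frac{|\sin(\pi l)|\Gamma^2(1+l)}{\pi\Gamma(2+2l)}\frac{(\xi-\eta)^{1+2l}z}{\xi^{l+1}(\eta-z)^{l+1}}\left|{}_2F_1(1+l,1+l;2+2l;\sigma_2)\right|$. *)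

theory Defs
  imports "HOL-Analysis.Analysis"
begin

definition hyp2F1_series :: "real \<Rightarrow> real \<Rightarrow> real \<Rightarrow> real \<Rightarrow> real" where
  "hyp2F1_series a b c x =
     (\<Sum>n. pochhammer a n * pochhammer b n / (pochhammer c n * fact n) * x ^ n)"

text \<open>Gauss hypergeometric function: the series on \<open>|x| < 1\<close>, and for \<open>x \<le> -1\<close>
  its analytic continuation given by the Pfaff transformation
  \<open>2F1(a,b;c;x) = (1-x)^(-a) 2F1(a,c-b;c;x/(x-1))\<close>, where \<open>x/(x-1) \<in> [1/2,1)\<close>.\<close>
definition hyp2F1 :: "real \<Rightarrow> real \<Rightarrow> real \<Rightarrow> real \<Rightarrow> real" where
  "hyp2F1 a b c x =
     (if \<bar>x\<bar> < 1 then hyp2F1_series a b c x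
      else (1 - x) powr (-a) * hyp2F1_series a (c - b) c (x / (x - 1)))"

definition sigma1 :: "real \<Rightarrow> real \<Rightarrow> real \<Rightarrow> real" where
  "sigma1 z \<xi> \<eta> = ((z - \<xi>) * \<eta>) / ((z - \<eta>) * \<xi>)"

definition V1 :: "real \<Rightarrow> real \<Rightarrow> real \<Rightarrow> real \<Rightarrow> real" where
  "V1 l z \<xi> \<eta> = (z - \<eta>) powr l * \<xi> powr l / z powr (2 * l)
      * \<bar>hyp2F1 (-l) (-l) 1 (sigma1 z \<xi> \<eta>)\<bar>"

definition sigma2 :: "real \<Rightarrow> real \<Rightarrow> real \<Rightarrow> real" where
  "sigma2 z \<xi> \<eta> = - (z * (\<xi> - \<eta>)) / (\<xi> * (\<eta> - z))"

definition V2 :: "real \<Rightarrow> real \<Rightarrow> real \<Rightarrow> real \<Rightarrow> real" where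
  "V2 l z \<xi> \<eta> = \<bar>sin (pi * l)\<bar> * (Gamma (1 + l))\<^sup>2 / (pi * Gamma (2 + 2 * l))
      * ((\<xi> - \<eta>) powr (1 + 2 * l) * z / (\<xi> powr (l + 1) * (\<eta> - z) powr (l + 1)))
      * \<bar>hyp2F1 (1 + l) (1 + l) (2 + 2 * l) (sigma2 z \<xi> \<eta>)\<bar>"

end

theory Submission
  imports Defs
begin

text \<open>
  The Taylor coefficients of each hypergeometric series that occurs are eventually dominated,
  ratio by ratio, by those of \<open>(1 - t) powr (-1/2)\<close>; hence \<open>\<bar>2F1(x)\<bar> \<le> K (1 - \<bar>x\<bar>) powr (-1/2)\<close>
  on \<open>(-1, 1)\<close>, and via the Pfaff transformation a corresponding bound holds for arguments
  \<open>\<le> -1\<close>. Both \<open>\<sigma>\<^sub>1\<close> and \<open>\<sigma>\<^sub>2\<close> are negative, and the point where they cross \<open>-1\<close>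
  splits the range of integration in two. On each piece the weighted integrand is at most
  \<open>K (\<xi> - \<eta>) powr (l + 1/2)\<close> times an inverse square root singular at one end of the piece,
  scaled so that its integral is at most 2.
\<close>

definition inv_sqrt_coeff :: "nat \<Rightarrow> real" where
  "inv_sqrt_coeff n = pochhammer (1/2) n / fact n"

lemma inv_sqrt_coeff_pos: "inv_sqrt_coeff n > 0"
  unfolding inv_sqrt_coeff_def by (intro divide_pos_pos pochhammer_pos) auto

lemma inv_sqrt_coeff_Suc:
  "inv_sqrt_coeff (Suc n) = inv_sqrt_coeff n * ((real n + 1/2) / (real n + 1))"
  unfolding inv_sqrt_coeff_def by (simp add: pochhammer_Suc field_simps)

lemma sums_inv_sqrt_coeff:
  assumes "\<bar>t\<bar> < 1"
  shows "(\<lambda>n. inv_sqrt_coeff n * t ^ n) sums (1 - t) powr (-1/2)"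
proof -
  have "(\<lambda>n. ((-1/2) gchoose n) * (-t) ^ n) sums (1 + -t) powr (-1/2)"
    using gen_binomial_real[of "-t" "-1/2"] assms by simp
  moreover have "((-1/2) gchoose n) * (-t) ^ n = inv_sqrt_coeff n * t ^ n" for n
    unfolding inv_sqrt_coeff_def gbinomial_pochhammer by (simp add: power_minus[of t] field_simps)
  ultimately show ?thesis by simp
qed

lemma abs_le_mult_of_ratio_le:
  fixes u w :: "nat \<Rightarrow> real"
  assumes w_pos: "\<And>n. w n > 0"
    and ratio: "\<And>n. n \<ge> N \<Longrightarrow> \<bar>u (Suc n)\<bar> * w n \<le> \<bar>u n\<bar> * w (Suc n)"
  shows "\<exists>K. \<forall>n. \<bar>u n\<bar> \<le> K * w n"
proof -
  define K where "K = (\<Sum>m\<le>N. \<bar>u m\<bar> / w m)"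
  have initial: "\<bar>u m\<bar> / w m \<le> K" if "m \<le> N" for m
    unfolding K_def using that w_pos by (intro member_le_sum) (auto simp: less_imp_le)
  have tail: "\<bar>u n\<bar> / w n \<le> \<bar>u N\<bar> / w N" if "n \<ge> N" for n
    using that
  proof (induction n rule: dec_induct)
    case (step n)
    have "\<bar>u (Suc n)\<bar> / w (Suc n) \<le> \<bar>u n\<bar> / w n"
      using ratio[OF step(1)] w_pos[of n] w_pos[of "Suc n"] by (simp add: divide_simps mult.commute)
    with step.IH show ?case by linarith
  qed simp
  have "\<bar>u n\<bar> / w n \<le> K" for n
    using initial[of n] initial[of N] tail[of n] by (cases "n \<le> N") auto
  then have "\<bar>u n\<bar> \<le> K * w n" for n
    using w_pos[of n] by (simp add: divide_simps)
  then show ?thesis by blast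
qed

lemma abs_suminf_le_inv_sqrt:
  fixes u :: "nat \<Rightarrow> real"
  assumes u: "\<And>n. \<bar>u n\<bar> \<le> K * inv_sqrt_coeff n" and x: "\<bar>x\<bar> < 1"
  shows "\<bar>\<Sum>n. u n * x ^ n\<bar> \<le> K * (1 - \<bar>x\<bar>) powr (-1/2)"
proof -
  have majorant: "(\<lambda>n. K * (inv_sqrt_coeff n * \<bar>x\<bar> ^ n)) sums (K * (1 - \<bar>x\<bar>) powr (-1/2))"
    using sums_mult[OF sums_inv_sqrt_coeff, of "\<bar>x\<bar>" K] x by simp
  have le: "\<bar>u n * x ^ n\<bar> \<le> K * (inv_sqrt_coeff n * \<bar>x\<bar> ^ n)" for n
    using mult_right_mono[OF u[of n], of "\<bar>x\<bar> ^ n"] by (simp add: abs_mult power_abs mult_ac)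
  have summable: "summable (\<lambda>n. \<bar>u n * x ^ n\<bar>)"
    by (rule summable_comparison_test[OF _ sums_summable[OF majorant]]) (use le in auto)
  have "\<bar>\<Sum>n. u n * x ^ n\<bar> \<le> (\<Sum>n. \<bar>u n * x ^ n\<bar>)"
    using summable_rabs[OF summable] .
  also have "\<dots> \<le> (\<Sum>n. K * (inv_sqrt_coeff n * \<bar>x\<bar> ^ n))"
    using le summable sums_summable[OF majorant] by (intro suminf_le) auto
  also have "\<dots> = K * (1 - \<bar>x\<bar>) powr (-1/2)"
    using majorant by (simp add: sums_iff)
  finally show ?thesis .
qed

definition hyp2F1_coeff :: "real \<Rightarrow> real \<Rightarrow> real \<Rightarrow> nat \<Rightarrow> real" where
  "hyp2F1_coeff a b c n = pochhammer a n * pochhammer b n / (pochhammer c n * fact n)"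

lemma hyp2F1_coeff_Suc:
  assumes "c > 0"
  shows "hyp2F1_coeff a b c (Suc n) =
           hyp2F1_coeff a b c n * ((a + n) * (b + n) / ((c + n) * (real n + 1)))"
  using pochhammer_pos[OF assms, of n] assms unfolding hyp2F1_coeff_def
  by (simp add: pochhammer_Suc field_simps)

lemma hyp2F1_ratio_eventually_le:
  assumes "a + b < c + 1/2"
  obtains N where "\<And>n. n \<ge> N \<Longrightarrow> \<bar>(a + real n) * (b + real n)\<bar> \<le> (c + real n) * (real n + 1/2)"
proof
  define \<delta> where "\<delta> = c + 1/2 - a - b"
  fix n assume "nat \<lceil>max (\<bar>c/2 - a*b\<bar> / \<delta>) (max (-a) (-b))\<rceil> \<le> n"
  then have n: "\<bar>c/2 - a*b\<bar> / \<delta> \<le> n" "-a \<le> n" "-b \<le> n" by linarith+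
  have "\<delta> > 0" using assms unfolding \<delta>_def by simp
  with n(1) have "\<bar>c/2 - a*b\<bar> \<le> \<delta> * n" by (simp add: divide_le_eq mult.commute)
  moreover have "(c + n) * (n + 1/2) = (a + n) * (b + n) + (\<delta> * n + (c/2 - a*b))"
    unfolding \<delta>_def by (simp add: algebra_simps)
  moreover have "(a + n) * (b + n) \<ge> 0" using n by simp
  ultimately show "\<bar>(a + real n) * (b + real n)\<bar> \<le> (c + real n) * (real n + 1/2)" by simp
qed

definition hyp2F1_series_dominated :: "real \<Rightarrow> real \<Rightarrow> real \<Rightarrow> real \<Rightarrow> bool" where
  "hyp2F1_series_dominated a b c K \<longleftrightarrow>
     (\<forall>x. \<bar>x\<bar> < 1 \<longrightarrow> \<bar>hyp2F1_series a b c x\<bar> \<le> K * (1 - \<bar>x\<bar>) powr (-1/2))"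

lemma hyp2F1_series_dominated_nonneg:
  assumes "hyp2F1_series_dominated a b c K"
  shows "K \<ge> 0"
proof -
  have "\<bar>hyp2F1_series a b c 0\<bar> \<le> K"
    using assms[unfolded hyp2F1_series_dominated_def, rule_format, of 0] by simp
  then show ?thesis
    using abs_ge_zero order_trans by blast
qed

lemma hyp2F1_series_dominated_exists:
  assumes c: "c > 0" and "a + b < c + 1/2"
  shows "\<exists>K. hyp2F1_series_dominated a b c K"
proof -
  obtain N where N: "\<And>n. n \<ge> N \<Longrightarrow> \<bar>(a + real n) * (b + real n)\<bar> \<le> (c + real n) * (real n + 1/2)"
    using hyp2F1_ratio_eventually_le assms(2) by blast
  have "\<bar>hyp2F1_coeff a b c (Suc n)\<bar> * inv_sqrt_coeff n \<le> \<bar>hyp2F1_coeff a b c n\<bar> * inv_sqrt_coeff (Suc n)"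
    if "n \<ge> N" for n
  proof -
    have "\<bar>(a + n) * (b + n) / ((c + n) * (real n + 1))\<bar> = \<bar>(a + n) * (b + n)\<bar> / ((c + n) * (real n + 1))"
      using c by (simp add: abs_divide)
    also have "\<dots> \<le> (c + n) * (n + 1/2) / ((c + n) * (real n + 1))"
      using N[OF that] c by (intro divide_right_mono) auto
    also have "\<dots> = (real n + 1/2) / (real n + 1)"
      using c by (intro nonzero_mult_divide_mult_cancel_left) simp
    finally have "\<bar>hyp2F1_coeff a b c n\<bar> * \<bar>(a + n) * (b + n) / ((c + n) * (real n + 1))\<bar> * inv_sqrt_coeff n
        \<le> \<bar>hyp2F1_coeff a b c n\<bar> * ((real n + 1/2) / (real n + 1)) * inv_sqrt_coeff n"
      using inv_sqrt_coeff_pos[of n] by (intro mult_right_mono mult_left_mono) auto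
    then show ?thesis
      unfolding hyp2F1_coeff_Suc[OF c] inv_sqrt_coeff_Suc abs_mult by (simp only: mult_ac)
  qed
  then obtain K where K: "\<And>n. \<bar>hyp2F1_coeff a b c n\<bar> \<le> K * inv_sqrt_coeff n"
    using abs_le_mult_of_ratio_le[of inv_sqrt_coeff N "hyp2F1_coeff a b c"] inv_sqrt_coeff_pos by blast
  then have "hyp2F1_series_dominated a b c K"
    using abs_suminf_le_inv_sqrt[OF K]
    unfolding hyp2F1_series_dominated_def hyp2F1_series_def hyp2F1_coeff_def by blast
  then show ?thesis ..
qed

lemma hyp2F1_neg_abs_le:
  assumes "hyp2F1_series_dominated a b c K" "0 \<le> s" "s < 1"
  shows "\<bar>hyp2F1 a b c (-s)\<bar> \<le> K * (1 - s) powr (-1/2)"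
proof -
  have "\<bar>-s\<bar> < 1" using assms(2,3) by simp
  with assms(1) have "\<bar>hyp2F1_series a b c (-s)\<bar> \<le> K * (1 - \<bar>-s\<bar>) powr (-1/2)"
    unfolding hyp2F1_series_dominated_def by blast
  with \<open>\<bar>-s\<bar> < 1\<close> show ?thesis
    using assms(2) unfolding hyp2F1_def by simp
qed

lemma hyp2F1_neg_abs_le_Pfaff:
  assumes K: "hyp2F1_series_dominated a (c - b) c K" and s: "1 \<le> s"
  shows "\<bar>hyp2F1 a b c (-s)\<bar> \<le> K * (1 + s) powr (1/2 - a)"
proof -
  have y: "\<bar>s / (1 + s)\<bar> < 1" "1 - \<bar>s / (1 + s)\<bar> = 1 / (1 + s)"
    using s by (auto simp: field_simps)
  from K y(1) have "\<bar>hyp2F1_series a (c - b) c (s / (1 + s))\<bar> \<le> K * (1 - \<bar>s / (1 + s)\<bar>) powr (-1/2)"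
    unfolding hyp2F1_series_dominated_def by blast
  also have "(1 - \<bar>s / (1 + s)\<bar>) powr (-1/2) = (1 + s) powr (1/2)"
    unfolding y(2) using s by (simp add: powr_divide powr_minus_divide)
  moreover have "hyp2F1 a b c (-s) = (1 + s) powr (-a) * hyp2F1_series a (c - b) c (s / (1 + s))"
  proof -
    have "- (s / (- s - 1)) = s / (1 + s)"
      using s by (simp add: field_simps)
    then show ?thesis
      using s unfolding hyp2F1_def by simp
  qed
  ultimately have "\<bar>hyp2F1 a b c (-s)\<bar> \<le> (1 + s) powr (-a) * (K * (1 + s) powr (1/2))"
    by (simp add: abs_mult mult_left_mono)
  also have "\<dots> = K * (1 + s) powr (1/2 - a)"
    by (simp add: powr_add[symmetric])
  finally show ?thesis .
qed

lemma V1_weighted_eq: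
  assumes "0 < \<eta>" "\<eta> < z" "0 < \<xi>"
  shows "V1 l z \<xi> \<eta> * z powr (l - 1/2) =
           (\<xi> * (z - \<eta>) / z) powr (l + 1/2) * (\<xi> * (z - \<eta>)) powr (-1/2)
           * \<bar>hyp2F1 (-l) (-l) 1 (- ((\<xi> - z) * \<eta> / (\<xi> * (z - \<eta>))))\<bar>"
proof -
  define p where "p = \<xi> * (z - \<eta>)"
  have p_pos: "p > 0" unfolding p_def using assms by simp
  have "(z - \<eta>) powr l * \<xi> powr l / z powr (2 * l) * z powr (l - 1/2)
      = p powr l * (z powr (l - 1/2) / z powr (2 * l))"
    unfolding p_def by (simp add: powr_mult)
  also have "z powr (l - 1/2) / z powr (2 * l) = z powr (- (l + 1/2))"
    by (simp add: powr_diff[symmetric])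
  also have "p powr l * z powr (- (l + 1/2)) = p powr l / z powr (l + 1/2)"
    by (subst powr_minus_divide) simp
  also have "\<dots> = (p / z) powr (l + 1/2) * p powr (-1/2)"
    using p_pos by (simp add: powr_divide powr_add powr_minus_divide)
  finally have weight: "(z - \<eta>) powr l * \<xi> powr l / z powr (2 * l) * z powr (l - 1/2)
      = (p / z) powr (l + 1/2) * p powr (-1/2)" .
  have "sigma1 z \<xi> \<eta> = - ((\<xi> - z) * \<eta> / p)"
    unfolding sigma1_def p_def by (simp add: minus_divide_left algebra_simps)
  then have "V1 l z \<xi> \<eta> * z powr (l - 1/2) = (z - \<eta>) powr l * \<xi> powr l / z powr (2 * l) * z powr (l - 1/2)
      * \<bar>hyp2F1 (-l) (-l) 1 (- ((\<xi> - z) * \<eta> / p))\<bar>"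
    unfolding V1_def by (simp only: mult.assoc mult.commute mult.left_commute)
  then show ?thesis
    unfolding weight p_def .
qed

text \<open>The point \<open>z = 2\<xi>\<eta> / (\<xi> + \<eta>)\<close> is where \<open>\<sigma>\<^sub>1 = -1\<close>.\<close>

lemma V1_weighted_le:
  assumes l: "l \<ge> -1/2" and K: "hyp2F1_series_dominated (-l) (-l) 1 K"
    and z: "0 < \<eta>" "\<eta> < z" "z < \<xi>" "2 * \<xi> * \<eta> / (\<xi> + \<eta>) < z"
  shows "V1 l z \<xi> \<eta> * z powr (l - 1/2)
           \<le> K * (\<xi> - \<eta>) powr (l + 1/2) * ((\<xi> + \<eta>) * (z - 2 * \<xi> * \<eta> / (\<xi> + \<eta>))) powr (-1/2)"
proof -
  have "\<xi> + \<eta> > 0" using z by simp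
  then have z0: "2 * \<xi> * \<eta> < z * (\<xi> + \<eta>)"
    using z(4) by (simp add: pos_divide_less_eq)
  have z0_eq: "(\<xi> + \<eta>) * (z - 2 * \<xi> * \<eta> / (\<xi> + \<eta>)) = z * (\<xi> + \<eta>) - 2 * \<xi> * \<eta>"
    using \<open>\<xi> + \<eta> > 0\<close> by (simp add: field_simps)
  define p where "p = \<xi> * (z - \<eta>)"
  define s where "s = (\<xi> - z) * \<eta> / p"
  have p_pos: "p > 0" unfolding p_def using z by simp
  have s_nonneg: "s \<ge> 0" unfolding s_def using z p_pos by simp
  have "p * (1 - s) = p - (\<xi> - z) * \<eta>"
    unfolding s_def using p_pos by (simp add: right_diff_distrib)
  also have "\<dots> = z * (\<xi> + \<eta>) - 2 * \<xi> * \<eta>"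
    unfolding p_def by (simp add: algebra_simps)
  finally have p_s: "p * (1 - s) = z * (\<xi> + \<eta>) - 2 * \<xi> * \<eta>" .
  then have "0 < p * (1 - s)"
    using z0 by simp
  then have s_less: "s < 1"
    using p_pos by (simp add: zero_less_mult_iff)
  have "p / z \<le> \<xi> - \<eta>"
    unfolding p_def using z by (simp add: field_simps)
  then have ratio_le: "(p / z) powr (l + 1/2) \<le> (\<xi> - \<eta>) powr (l + 1/2)"
    using p_pos z l by (intro powr_mono2) auto
  have "V1 l z \<xi> \<eta> * z powr (l - 1/2) = (p / z) powr (l + 1/2) * p powr (-1/2) * \<bar>hyp2F1 (-l) (-l) 1 (-s)\<bar>"
    unfolding s_def p_def using z by (intro V1_weighted_eq) auto
  also have "\<dots> \<le> (\<xi> - \<eta>) powr (l + 1/2) * p powr (-1/2) * (K * (1 - s) powr (-1/2))"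
    using ratio_le hyp2F1_neg_abs_le[OF K s_nonneg s_less] by (intro mult_mono) auto
  also have "\<dots> = K * (\<xi> - \<eta>) powr (l + 1/2) * (p * (1 - s)) powr (-1/2)"
    by (simp add: powr_mult)
  finally show ?thesis unfolding p_s z0_eq .
qed

lemma V1_weighted_le_Pfaff:
  assumes K: "hyp2F1_series_dominated (-l) (1 + l) 1 K"
    and z: "0 < \<eta>" "\<eta> < z" "\<eta> < \<xi>" "z \<le> 2 * \<xi> * \<eta> / (\<xi> + \<eta>)"
  shows "V1 l z \<xi> \<eta> * z powr (l - 1/2) \<le> K * (\<xi> - \<eta>) powr (l + 1/2) * (\<xi> * (z - \<eta>)) powr (-1/2)"
proof -
  have z0: "z * (\<xi> + \<eta>) \<le> 2 * \<xi> * \<eta>"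
    using z by (simp add: pos_le_divide_eq)
  define p where "p = \<xi> * (z - \<eta>)"
  define s where "s = (\<xi> - z) * \<eta> / p"
  have p_pos: "p > 0" unfolding p_def using z by simp
  have "p * (1 + s) = p + (\<xi> - z) * \<eta>"
    unfolding s_def using p_pos by (simp add: distrib_left)
  also have "\<dots> = z * (\<xi> - \<eta>)"
    unfolding p_def by (simp add: algebra_simps)
  finally have p_s: "p * (1 + s) = z * (\<xi> - \<eta>)" .
  have "p \<le> (\<xi> - z) * \<eta>"
    unfolding p_def using z0 by (simp add: algebra_simps)
  then have s_ge: "s \<ge> 1"
    unfolding s_def using p_pos by simp
  have "hyp2F1_series_dominated (-l) (1 - - l) 1 K"
    using K by simp
  from hyp2F1_neg_abs_le_Pfaff[OF this s_ge]
  have F: "\<bar>hyp2F1 (-l) (-l) 1 (-s)\<bar> \<le> K * (1 + s) powr (l + 1/2)"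
    by (simp add: add.commute)
  have "V1 l z \<xi> \<eta> * z powr (l - 1/2) = (p / z) powr (l + 1/2) * p powr (-1/2) * \<bar>hyp2F1 (-l) (-l) 1 (-s)\<bar>"
    unfolding s_def p_def using z by (intro V1_weighted_eq) auto
  also have "\<dots> \<le> (p / z) powr (l + 1/2) * p powr (-1/2) * (K * (1 + s) powr (l + 1/2))"
    using F by (intro mult_left_mono) auto
  also have "\<dots> = K * (p * (1 + s) / z) powr (l + 1/2) * p powr (-1/2)"
    using p_pos z s_ge by (simp add: powr_mult powr_divide)
  also have "p * (1 + s) / z = \<xi> - \<eta>"
    unfolding p_s using z by simp
  finally show ?thesis unfolding p_def by (simp add: mult_ac)
qed

definition V2_prefactor :: "real \<Rightarrow> real" where
  "V2_prefactor l = \<bar>sin (pi * l)\<bar> * (Gamma (1 + l))\<^sup>2 / (pi * Gamma (2 + 2 * l))"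

lemma V2_prefactor_nonneg:
  assumes "l \<ge> -1/2"
  shows "V2_prefactor l \<ge> 0"
  using Gamma_real_pos[of "2 + 2 * l"] assms unfolding V2_prefactor_def by simp

lemma V2_weighted_eq:
  assumes "0 < z" "z < \<eta>" "\<eta> < \<xi>"
  shows "V2 l z \<xi> \<eta> * z powr (l - 1/2) =
           V2_prefactor l * (\<xi> - \<eta>) powr (l + 1/2)
           * (z * (\<xi> - \<eta>) / (\<xi> * (\<eta> - z))) powr (l + 1/2) * (\<xi> * (\<eta> - z)) powr (-1/2)
           * \<bar>hyp2F1 (1 + l) (1 + l) (2 + 2 * l) (- (z * (\<xi> - \<eta>) / (\<xi> * (\<eta> - z))))\<bar>"
proof -
  define d where "d = \<xi> - \<eta>"
  define q where "q = \<xi> * (\<eta> - z)"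
  have q_pos: "q > 0" unfolding q_def using assms by simp
  have "\<xi> powr (l + 1) * (\<eta> - z) powr (l + 1) = q powr (l + 1)"
    unfolding q_def by (simp add: powr_mult)
  also have "\<dots> = q powr (l + 1/2) * q powr (1/2)"
    by (simp add: powr_add[symmetric] add.commute)
  finally have "\<xi> powr (l + 1) * (\<eta> - z) powr (l + 1) = q powr (l + 1/2) * q powr (1/2)" .
  moreover have "z * z powr (l - 1/2) = z powr (l + 1/2)"
    using assms powr_add[of z 1 "l - 1/2"] by (simp add: algebra_simps)
  moreover have "d powr (1 + 2 * l) = d powr (l + 1/2) * d powr (l + 1/2)"
    by (simp add: powr_add[symmetric] add.commute)
  ultimately have weight: "d powr (1 + 2 * l) * z / (\<xi> powr (l + 1) * (\<eta> - z) powr (l + 1)) * z powr (l - 1/2)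
      = d powr (l + 1/2) * (z * d / q) powr (l + 1/2) * q powr (-1/2)"
    using q_pos by (simp add: powr_divide powr_mult powr_minus_divide)
  have "sigma2 z \<xi> \<eta> = - (z * d / q)"
    unfolding sigma2_def d_def q_def by simp
  then have "V2 l z \<xi> \<eta> * z powr (l - 1/2) = V2_prefactor l
      * (d powr (1 + 2 * l) * z / (\<xi> powr (l + 1) * (\<eta> - z) powr (l + 1)) * z powr (l - 1/2))
      * \<bar>hyp2F1 (1 + l) (1 + l) (2 + 2 * l) (- (z * d / q))\<bar>"
    unfolding V2_def V2_prefactor_def d_def by (simp only: mult.assoc mult.commute mult.left_commute)
  also have "\<dots> = V2_prefactor l * (d powr (l + 1/2) * (z * d / q) powr (l + 1/2) * q powr (-1/2))
      * \<bar>hyp2F1 (1 + l) (1 + l) (2 + 2 * l) (- (z * d / q))\<bar>"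
    by (simp only: weight)
  finally show ?thesis
    unfolding d_def q_def by (simp only: mult.assoc)
qed

text \<open>The point \<open>z = \<xi>\<eta> / (2\<xi> - \<eta>)\<close> is where \<open>\<sigma>\<^sub>2 = -1\<close>.\<close>

lemma V2_weighted_le:
  assumes l: "l \<ge> -1/2" and K: "hyp2F1_series_dominated (1 + l) (1 + l) (2 + 2 * l) K"
    and z: "0 < z" "z < \<eta>" "\<eta> < \<xi>" "z < \<xi> * \<eta> / (2 * \<xi> - \<eta>)"
  shows "V2 l z \<xi> \<eta> * z powr (l - 1/2)
           \<le> V2_prefactor l * K * (\<xi> - \<eta>) powr (l + 1/2)
              * ((2 * \<xi> - \<eta>) * (\<xi> * \<eta> / (2 * \<xi> - \<eta>) - z)) powr (-1/2)"
proof -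
  have "2 * \<xi> - \<eta> > 0" using z by simp
  then have z1: "z * (2 * \<xi> - \<eta>) < \<xi> * \<eta>"
    using z(4) by (simp add: pos_less_divide_eq)
  have z1_eq: "(2 * \<xi> - \<eta>) * (\<xi> * \<eta> / (2 * \<xi> - \<eta>) - z) = \<xi> * \<eta> - z * (2 * \<xi> - \<eta>)"
    using \<open>2 * \<xi> - \<eta> > 0\<close> by (simp add: field_simps)
  define q where "q = \<xi> * (\<eta> - z)"
  define s where "s = z * (\<xi> - \<eta>) / q"
  have q_pos: "q > 0" unfolding q_def using z by simp
  have s_nonneg: "s \<ge> 0" unfolding s_def using z q_pos by simp
  have "q * s = z * (\<xi> - \<eta>)"
    unfolding s_def using q_pos by simp
  then have "q * (1 - s) = q - z * (\<xi> - \<eta>)"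
    by (simp add: right_diff_distrib)
  also have "\<dots> = \<xi> * \<eta> - z * (2 * \<xi> - \<eta>)"
    unfolding q_def by (simp add: algebra_simps)
  finally have q_s: "q * (1 - s) = \<xi> * \<eta> - z * (2 * \<xi> - \<eta>)" .
  then have "0 < q * (1 - s)"
    using z1 by simp
  then have s_less: "s < 1"
    using q_pos by (simp add: zero_less_mult_iff)
  have s_pow: "s powr (l + 1/2) \<le> 1"
    using s_nonneg s_less l by (intro powr_le1) auto
  have "V2 l z \<xi> \<eta> * z powr (l - 1/2) = V2_prefactor l * (\<xi> - \<eta>) powr (l + 1/2)
      * s powr (l + 1/2) * q powr (-1/2) * \<bar>hyp2F1 (1 + l) (1 + l) (2 + 2 * l) (-s)\<bar>"
    unfolding s_def q_def using z by (intro V2_weighted_eq) auto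
  also have "\<dots> \<le> V2_prefactor l * (\<xi> - \<eta>) powr (l + 1/2) * 1 * q powr (-1/2) * (K * (1 - s) powr (-1/2))"
    using V2_prefactor_nonneg[OF l] s_pow hyp2F1_neg_abs_le[OF K s_nonneg s_less]
    by (intro mult_mono) auto
  also have "\<dots> = V2_prefactor l * K * (\<xi> - \<eta>) powr (l + 1/2) * (q * (1 - s)) powr (-1/2)"
    by (simp add: powr_mult)
  finally show ?thesis unfolding q_s z1_eq .
qed

lemma V2_weighted_le_Pfaff:
  assumes l: "l \<ge> -1/2" and K: "hyp2F1_series_dominated (1 + l) (1 + l) (2 + 2 * l) K"
    and z: "0 < z" "z < \<eta>" "\<eta> < \<xi>" "\<xi> * \<eta> / (2 * \<xi> - \<eta>) \<le> z"
  shows "V2 l z \<xi> \<eta> * z powr (l - 1/2)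
           \<le> V2_prefactor l * K * (\<xi> - \<eta>) powr (l + 1/2) * (\<xi> * (\<eta> - z)) powr (-1/2)"
proof -
  have z1: "\<xi> * \<eta> \<le> z * (2 * \<xi> - \<eta>)"
    using z by (simp add: pos_divide_le_eq)
  define q where "q = \<xi> * (\<eta> - z)"
  define s where "s = z * (\<xi> - \<eta>) / q"
  have q_pos: "q > 0" unfolding q_def using z by simp
  have "q \<le> z * (\<xi> - \<eta>)"
    unfolding q_def using z1 by (simp add: algebra_simps)
  then have s_ge: "s \<ge> 1"
    unfolding s_def using q_pos by simp
  have "hyp2F1_series_dominated (1 + l) ((2 + 2 * l) - (1 + l)) (2 + 2 * l) K"
    using K by (simp add: algebra_simps)
  from hyp2F1_neg_abs_le_Pfaff[OF this s_ge]
  have F: "\<bar>hyp2F1 (1 + l) (1 + l) (2 + 2 * l) (-s)\<bar> \<le> K * (1 + s) powr (- (l + 1/2))"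
    by (simp add: algebra_simps)
  have "s powr (l + 1/2) * (1 + s) powr (- (l + 1/2)) = (s / (1 + s)) powr (l + 1/2)"
    unfolding powr_minus_divide powr_divide by simp
  also have "\<dots> \<le> 1"
    using s_ge l by (intro powr_le1) auto
  finally have s_pow: "s powr (l + 1/2) * (1 + s) powr (- (l + 1/2)) \<le> 1" .
  have "V2 l z \<xi> \<eta> * z powr (l - 1/2) = V2_prefactor l * (\<xi> - \<eta>) powr (l + 1/2)
      * s powr (l + 1/2) * q powr (-1/2) * \<bar>hyp2F1 (1 + l) (1 + l) (2 + 2 * l) (-s)\<bar>"
    unfolding s_def q_def using z by (intro V2_weighted_eq) auto
  also have "\<dots> \<le> V2_prefactor l * (\<xi> - \<eta>) powr (l + 1/2)
      * s powr (l + 1/2) * q powr (-1/2) * (K * (1 + s) powr (- (l + 1/2)))"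
    using V2_prefactor_nonneg[OF l] F by (intro mult_left_mono) auto
  also have "\<dots> = V2_prefactor l * K * (\<xi> - \<eta>) powr (l + 1/2)
      * (s powr (l + 1/2) * (1 + s) powr (- (l + 1/2))) * q powr (-1/2)"
    by (simp add: mult_ac)
  also have "\<dots> \<le> V2_prefactor l * K * (\<xi> - \<eta>) powr (l + 1/2) * 1 * q powr (-1/2)"
    using V2_prefactor_nonneg[OF l] hyp2F1_series_dominated_nonneg[OF K] s_pow
    by (intro mult_right_mono mult_left_mono) auto
  finally show ?thesis unfolding q_def by simp
qed

lemma has_integral_powr_neg_half_left:
  assumes "0 < M" "a \<le> b"
  shows "((\<lambda>z. (M * (z - a)) powr (-1/2)) has_integral 2 * sqrt ((b - a) / M)) {a..b}"
proof -
  have "((\<lambda>x. x powr (-1/2)) has_integral 2 * (b - a) powr (1/2)) {0..b - a}"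
    using has_integral_powr_from_0[of "-1/2" "b - a"] assms by (simp add: mult.commute)
  from has_integral_shift_real_ivl[OF this, of "-a"]
  have "((\<lambda>z. (z - a) powr (-1/2)) has_integral 2 * sqrt (b - a)) {a..b}"
    using assms by (simp add: powr_half_sqrt)
  from has_integral_mult_right[OF this, of "M powr (-1/2)"]
  show ?thesis
    using assms by (simp add: powr_mult powr_minus_divide powr_half_sqrt real_sqrt_divide)
qed

lemma has_integral_powr_neg_half_right:
  assumes "0 < M" "a \<le> b"
  shows "((\<lambda>z. (M * (b - z)) powr (-1/2)) has_integral 2 * sqrt ((b - a) / M)) {a..b}"
proof -
  have "((\<lambda>z. (M * (z - -b)) powr (-1/2)) has_integral 2 * sqrt ((-a - -b) / M)) {-b..-a}"
    using has_integral_powr_neg_half_left[of M "-b" "-a"] assms by simp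
  then have "((\<lambda>x. (M * (b - - x)) powr (-1/2)) has_integral 2 * sqrt ((b - a) / M)) {-b..-a}"
    by (simp add: add.commute)
  then show ?thesis
    using has_integral_reflect_real[where f = "\<lambda>z. (M * (b - z)) powr (-1/2)"] by simp
qed

lemma set_nn_integral_le_piecewise:
  fixes f g1 g2 :: "real \<Rightarrow> real"
  assumes int1: "(g1 has_integral I1) T1" and int2: "(g2 has_integral I2) T2"
    and nonneg1: "\<And>z. z \<in> T1 \<Longrightarrow> 0 \<le> g1 z" and nonneg2: "\<And>z. z \<in> T2 \<Longrightarrow> 0 \<le> g2 z"
    and le: "\<And>z. z \<in> S \<Longrightarrow> (z \<in> T1 \<and> f z \<le> g1 z) \<or> (z \<in> T2 \<and> f z \<le> g2 z)"
  shows "(\<integral>\<^sup>+ z \<in> S. ennreal (f z) \<partial>lborel) \<le> ennreal (I1 + I2)"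
proof -
  define g where "g z = (if z \<in> T1 then g1 z else 0) + (if z \<in> T2 then g2 z else 0)" for z
  have "(g has_integral I1 + I2) UNIV"
    unfolding g_def using int1 int2
    by (intro has_integral_add) (simp_all only: has_integral_restrict_UNIV)
  moreover have g_nonneg: "0 \<le> g z" for z
    unfolding g_def using nonneg1 nonneg2 by auto
  ultimately have g_integral: "(\<integral>\<^sup>+ z. ennreal (g z) * indicator UNIV z \<partial>lborel) = ennreal (I1 + I2)"
    by (intro nn_integral_has_integral_lebesgue') auto
  have "f z \<le> g z" if "z \<in> S" for z
    using le[OF that] nonneg1 nonneg2 unfolding g_def by fastforce
  then have "(\<integral>\<^sup>+ z \<in> S. ennreal (f z) \<partial>lborel) \<le> (\<integral>\<^sup>+ z. ennreal (g z) * indicator UNIV z \<partial>lborel)"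
    by (intro nn_integral_mono) (auto simp: ennreal_leI split: split_indicator)
  then show ?thesis
    unfolding g_integral .
qed

lemma scaled_sqrt_divide_le:
  fixes C x M :: real
  assumes "0 \<le> C" "0 \<le> x" "x \<le> M"
  shows "C * (2 * sqrt (x / M)) \<le> 2 * C"
proof -
  have "sqrt (x / M) \<le> 1"
    using assms by (cases "M = 0") (auto simp: divide_le_eq_1)
  then show ?thesis
    using assms(1) mult_left_mono[of "sqrt (x / M)" 1 "2 * C"] by (simp add: mult_ac)
qed

lemma V1_integral_le:
  assumes l: "l \<ge> -1/2"
    and K: "hyp2F1_series_dominated (-l) (-l) 1 K" and K': "hyp2F1_series_dominated (-l) (1 + l) 1 K'"
    and \<eta>\<xi>: "0 < \<eta>" "\<eta> < \<xi>"
  shows "(\<integral>\<^sup>+ z \<in> {\<eta><..<\<xi>}. ennreal (V1 l z \<xi> \<eta> * z powr (l - 1/2)) \<partial>lborel)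
           \<le> ennreal (2 * (K + K') * (\<xi> - \<eta>) powr (l + 1/2))"
proof -
  define D where "D = (\<xi> - \<eta>) powr (l + 1/2)"
  define z0 where "z0 = 2 * \<xi> * \<eta> / (\<xi> + \<eta>)"
  have z0: "\<eta> < z0" "z0 < \<xi>"
    unfolding z0_def using \<eta>\<xi> by (simp_all add: field_simps)
  have KD: "0 \<le> K * D" "0 \<le> K' * D"
    using hyp2F1_series_dominated_nonneg K K' unfolding D_def by auto
  have "(\<integral>\<^sup>+ z \<in> {\<eta><..<\<xi>}. ennreal (V1 l z \<xi> \<eta> * z powr (l - 1/2)) \<partial>lborel)
      \<le> ennreal (K * D * (2 * sqrt ((\<xi> - z0) / (\<xi> + \<eta>))) + K' * D * (2 * sqrt ((z0 - \<eta>) / \<xi>)))"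
  proof (rule set_nn_integral_le_piecewise)
    show "((\<lambda>z. K * D * ((\<xi> + \<eta>) * (z - z0)) powr (-1/2))
        has_integral K * D * (2 * sqrt ((\<xi> - z0) / (\<xi> + \<eta>)))) {z0..\<xi>}"
      using z0 \<eta>\<xi> by (intro has_integral_mult_right has_integral_powr_neg_half_left) auto
    show "((\<lambda>z. K' * D * (\<xi> * (z - \<eta>)) powr (-1/2))
        has_integral K' * D * (2 * sqrt ((z0 - \<eta>) / \<xi>))) {\<eta>..z0}"
      using z0 \<eta>\<xi> by (intro has_integral_mult_right has_integral_powr_neg_half_left) auto
    show "0 \<le> K * D * ((\<xi> + \<eta>) * (z - z0)) powr (-1/2)" "0 \<le> K' * D * (\<xi> * (z - \<eta>)) powr (-1/2)" for z
      using KD by simp_all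
    fix z assume z: "z \<in> {\<eta><..<\<xi>}"
    show "z \<in> {z0..\<xi>} \<and> V1 l z \<xi> \<eta> * z powr (l - 1/2) \<le> K * D * ((\<xi> + \<eta>) * (z - z0)) powr (-1/2) \<or>
          z \<in> {\<eta>..z0} \<and> V1 l z \<xi> \<eta> * z powr (l - 1/2) \<le> K' * D * (\<xi> * (z - \<eta>)) powr (-1/2)"
    proof (cases "z0 < z")
      case True
      then show ?thesis
        using z V1_weighted_le[OF l K, of \<eta> z \<xi>] \<eta>\<xi> unfolding z0_def D_def by auto
    next
      case False
      then show ?thesis
        using z V1_weighted_le_Pfaff[OF K', of \<eta> z \<xi>] \<eta>\<xi> unfolding z0_def D_def by auto
    qed
  qed
  also have "\<dots> \<le> ennreal (2 * (K * D) + 2 * (K' * D))"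
    using z0 \<eta>\<xi> KD by (intro ennreal_leI add_mono scaled_sqrt_divide_le) auto
  also have "2 * (K * D) + 2 * (K' * D) = 2 * (K + K') * (\<xi> - \<eta>) powr (l + 1/2)"
    unfolding D_def by (simp add: algebra_simps)
  finally show ?thesis .
qed

lemma V2_integral_le:
  assumes l: "l \<ge> -1/2" and K: "hyp2F1_series_dominated (1 + l) (1 + l) (2 + 2 * l) K"
    and \<eta>\<xi>: "0 < \<eta>" "\<eta> < \<xi>"
  shows "(\<integral>\<^sup>+ z \<in> {0<..<\<eta>}. ennreal (V2 l z \<xi> \<eta> * z powr (l - 1/2)) \<partial>lborel)
           \<le> ennreal (4 * V2_prefactor l * K * (\<xi> - \<eta>) powr (l + 1/2))"
proof -
  define C where "C = V2_prefactor l * K * (\<xi> - \<eta>) powr (l + 1/2)"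
  define z1 where "z1 = \<xi> * \<eta> / (2 * \<xi> - \<eta>)"
  have z1: "0 < z1" "z1 < \<eta>"
    unfolding z1_def using \<eta>\<xi> by (simp_all add: field_simps)
  have C: "0 \<le> C"
    unfolding C_def using V2_prefactor_nonneg[OF l] hyp2F1_series_dominated_nonneg[OF K] by simp
  have "(\<integral>\<^sup>+ z \<in> {0<..<\<eta>}. ennreal (V2 l z \<xi> \<eta> * z powr (l - 1/2)) \<partial>lborel)
      \<le> ennreal (C * (2 * sqrt ((z1 - 0) / (2 * \<xi> - \<eta>))) + C * (2 * sqrt ((\<eta> - z1) / \<xi>)))"
  proof (rule set_nn_integral_le_piecewise)
    show "((\<lambda>z. C * ((2 * \<xi> - \<eta>) * (z1 - z)) powr (-1/2))
        has_integral C * (2 * sqrt ((z1 - 0) / (2 * \<xi> - \<eta>)))) {0..z1}"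
      using z1 \<eta>\<xi> by (intro has_integral_mult_right has_integral_powr_neg_half_right) auto
    show "((\<lambda>z. C * (\<xi> * (\<eta> - z)) powr (-1/2))
        has_integral C * (2 * sqrt ((\<eta> - z1) / \<xi>))) {z1..\<eta>}"
      using z1 \<eta>\<xi> by (intro has_integral_mult_right has_integral_powr_neg_half_right) auto
    show "0 \<le> C * ((2 * \<xi> - \<eta>) * (z1 - z)) powr (-1/2)" "0 \<le> C * (\<xi> * (\<eta> - z)) powr (-1/2)" for z
      using C by simp_all
    fix z assume z: "z \<in> {0<..<\<eta>}"
    show "z \<in> {0..z1} \<and> V2 l z \<xi> \<eta> * z powr (l - 1/2) \<le> C * ((2 * \<xi> - \<eta>) * (z1 - z)) powr (-1/2) \<or>
          z \<in> {z1..\<eta>} \<and> V2 l z \<xi> \<eta> * z powr (l - 1/2) \<le> C * (\<xi> * (\<eta> - z)) powr (-1/2)"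
    proof (cases "z < z1")
      case True
      then show ?thesis
        using z V2_weighted_le[OF l K, of z \<eta> \<xi>] \<eta>\<xi> unfolding z1_def C_def by auto
    next
      case False
      then show ?thesis
        using z V2_weighted_le_Pfaff[OF l K, of z \<eta> \<xi>] \<eta>\<xi> unfolding z1_def C_def by auto
    qed
  qed
  also have "\<dots> \<le> ennreal (2 * C + 2 * C)"
    using z1 \<eta>\<xi> C by (intro ennreal_leI add_mono scaled_sqrt_divide_le) auto
  also have "2 * C + 2 * C = 4 * V2_prefactor l * K * (\<xi> - \<eta>) powr (l + 1/2)"
    unfolding C_def by simp
  finally show ?thesis .
qed

theorem corollaryA3:
  fixes l :: real
  assumes "l \<ge> -1/2"
  shows "\<exists>A1 A2 :: real. \<forall>\<eta> \<xi> :: real. 0 < \<eta> \<and> \<eta> < \<xi> \<longrightarrow>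
           (\<integral>\<^sup>+ z \<in> {\<eta><..<\<xi>}. ennreal (V1 l z \<xi> \<eta> * z powr (l - 1/2)) \<partial>lborel)
              \<le> ennreal (A1 * (\<xi> - \<eta>) powr (l + 1/2)) \<and>
           (\<integral>\<^sup>+ z \<in> {0<..<\<eta>}. ennreal (V2 l z \<xi> \<eta> * z powr (l - 1/2)) \<partial>lborel)
              \<le> ennreal (A2 * (\<xi> - \<eta>) powr (l + 1/2))"
proof -
  obtain K1 where K1: "hyp2F1_series_dominated (-l) (-l) 1 K1"
    using hyp2F1_series_dominated_exists[of 1 "-l" "-l"] assms by auto
  obtain K1' where K1': "hyp2F1_series_dominated (-l) (1 + l) 1 K1'"
    using hyp2F1_series_dominated_exists[of 1 "-l" "1 + l"] by auto
  obtain K2 where K2: "hyp2F1_series_dominated (1 + l) (1 + l) (2 + 2 * l) K2"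
    using hyp2F1_series_dominated_exists[of "2 + 2 * l" "1 + l" "1 + l"] assms by auto
  show ?thesis
    using V1_integral_le[OF assms K1 K1'] V2_integral_le[OF assms K2]
    by (intro exI[of _ "2 * (K1 + K1')"] exI[of _ "4 * V2_prefactor l * K2"]) simp
qed

end
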